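(* Let $G$ be a finite simple graph and let $\mathcal{P}'\subset\mathcal{P}$ be sets of vertices of $G$, with no two vertices of $\mathcal{P}$ adjacent, $|\mathcal{P}'|=m_0$ and $|\mathcal{P}|=m_0+m$ ($m_0,m\ge0$ integers). If the pinned graph $(G,\mathcal{P}')$ is $k$-admissible, then the pinned graph $(G,\mathcal{P})$ is $(k+m)$-admissible.
   Context: For a pinned graph $(G,\mathcal{Q})$ with $G=(\mathcal{V},\mathcal{E})$ and $q=|\mathcal{Q}|$, a construction order is an ordering $v_1,\dots,v_l$ of $\mathcal{V}$ whose first $q$ entries are exactly the vertices of $\mathcal{Q}$; for $i>q$ the back-degree of $v_i$ is the number of vertices among $v_1,\dots,v_{i-1}$ adjacent to $v_i$. $(G,\mathcal{Q})$ is $k$-admissible if some construction order has all back-degrees (for $i>q$) at most $k$. *)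

theory Defs
  imports Main
begin

definition simple_graph :: "'a set \<Rightarrow> ('a \<Rightarrow> 'a \<Rightarrow> bool) \<Rightarrow> bool" where
  "simple_graph V E \<longleftrightarrow> finite V \<and> (\<forall>u v. E u v \<longrightarrow> u \<in> V \<and> v \<in> V)
     \<and> (\<forall>u v. E u v \<longrightarrow> E v u) \<and> (\<forall>v. \<not> E v v)"

definition construction_order :: "'a set \<Rightarrow> 'a set \<Rightarrow> 'a list \<Rightarrow> bool" where
  "construction_order V Q vs \<longleftrightarrow> distinct vs \<and> set vs = V \<and> set (take (card Q) vs) = Q"

definition back_degree :: "('a \<Rightarrow> 'a \<Rightarrow> bool) \<Rightarrow> 'a list \<Rightarrow> nat \<Rightarrow> nat" where
  "back_degree E vs i = card {j. j < i \<and> E (vs ! j) (vs ! i)}"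

definition admissible :: "nat \<Rightarrow> 'a set \<Rightarrow> ('a \<Rightarrow> 'a \<Rightarrow> bool) \<Rightarrow> 'a set \<Rightarrow> bool" where
  "admissible k V E Q \<longleftrightarrow> (\<exists>vs. construction_order V Q vs \<and>
     (\<forall>i. card Q \<le> i \<and> i < length vs \<longrightarrow> back_degree E vs i \<le> k))"

end

theory Submission
  imports Defs
begin

(* Move the vertices of P to the front of a construction order for (G,P'), keeping the relative
   order of all other vertices. An unpinned vertex v then has as earlier vertices only those that
   preceded it before, together with vertices of P - P' (the vertices of P' preceded it already),
   so its back-degree grows by at most |P - P'| = m. *)

lemma back_degree_append_Cons:
  assumes "distinct (xs @ v # ys)"
  shows "back_degree E (xs @ v # ys) (length xs) = card {u \<in> set xs. E u v}"
proof -
  let ?vs = "xs @ v # ys"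
  let ?J = "{j. j < length xs \<and> E (?vs ! j) (?vs ! length xs)}"
  have "{u \<in> set xs. E u v} = (!) ?vs ` ?J"
    by (force simp: nth_append in_set_conv_nth)
  moreover have "inj_on ((!) ?vs) ?J"
    using assms by (auto simp: inj_on_def nth_eq_iff_index_eq)
  ultimately show ?thesis
    by (simp add: back_degree_def card_image)
qed

lemma back_degree_le_if_earlier_subset:
  assumes "distinct (xs @ v # xs')" and "distinct (ys @ v # ys')"
    and "set ys \<subseteq> set xs \<union> S" and "finite S"
  shows "back_degree E (ys @ v # ys') (length ys) \<le> back_degree E (xs @ v # xs') (length xs) + card S"
proof -
  have "card {u \<in> set ys. E u v} \<le> card ({u \<in> set xs. E u v} \<union> S)"
    using assms(3,4) by (intro card_mono) auto
  also have "\<dots> \<le> card {u \<in> set xs. E u v} + card S"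
    by (rule card_Un_le)
  finally show ?thesis
    using assms(1,2) by (simp add: back_degree_append_Cons)
qed

lemma construction_order_nth_notin:
  assumes "construction_order V Q vs" and "card Q \<le> i" and "i < length vs"
  shows "vs ! i \<notin> Q"
proof -
  have "vs ! i = drop (card Q) vs ! (i - card Q)" and "i - card Q < length (drop (card Q) vs)"
    using assms(2,3) by simp_all
  then have "vs ! i \<in> set (drop (card Q) vs)"
    by (metis nth_mem)
  then show ?thesis
    using assms(1) set_take_disj_set_drop_if_distinct[of vs "card Q" "card Q"]
    by (auto simp: construction_order_def)
qed

lemma construction_order_pinned_before:
  assumes "construction_order V Q (xs @ v # ys)" and "v \<notin> Q"
  shows "card Q \<le> length xs" and "Q \<subseteq> set xs"
proof -
  have Q: "set (take (card Q) (xs @ v # ys)) = Q"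
    using assms(1) by (simp add: construction_order_def)
  show le: "card Q \<le> length xs"
  proof (rule ccontr)
    assume "\<not> card Q \<le> length xs"
    then obtain n where "card Q - length xs = Suc n"
      by (metis Suc_diff_Suc not_le)
    then have "v \<in> set (take (card Q) (xs @ v # ys))"
      by (simp add: take_append)
    then show False
      using Q assms(2) by blast
  qed
  have "take (card Q) (xs @ v # ys) = take (card Q) xs"
    using le by simp
  then show "Q \<subseteq> set xs"
    using Q set_take_subset by metis
qed

lemma filter_eq_append_ConsD:
  "filter Q xs = ys @ v # zs \<Longrightarrow> \<exists>xs1 xs2. xs = xs1 @ v # xs2 \<and> filter Q xs1 = ys"
proof (induction ys arbitrary: xs)
  case Nil
  then show ?case by (auto dest!: filter_eq_ConsD)
next
  case (Cons y ys)
  then obtain us ws where "xs = us @ y # ws" "\<forall>u\<in>set us. \<not> Q u" "Q y" "filter Q ws = ys @ v # zs"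
    by (auto dest!: filter_eq_ConsD)
  moreover from Cons.IH[OF this(4)] obtain ws1 ws2 where "ws = ws1 @ v # ws2" "filter Q ws1 = ys"
    by blast
  ultimately show ?case
    by (intro exI[of _ "us @ y # ws1"] exI[of _ ws2]) auto
qed

definition pins_first :: "'a set \<Rightarrow> 'a list \<Rightarrow> 'a list" where
  "pins_first P vs = filter (\<lambda>x. x \<in> P) vs @ filter (\<lambda>x. x \<notin> P) vs"

lemma construction_order_pins_first:
  assumes "construction_order V Q vs" and "P \<subseteq> V"
  shows "construction_order V P (pins_first P vs)"
proof -
  have vs: "distinct vs" "set vs = V"
    using assms(1) by (simp_all add: construction_order_def)
  have "set (filter (\<lambda>x. x \<in> P) vs) = P"
    using vs(2) assms(2) by auto
  moreover have "distinct (filter (\<lambda>x. x \<in> P) vs)"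
    using vs(1) by simp
  ultimately have "length (filter (\<lambda>x. x \<in> P) vs) = card P"
    by (metis distinct_card)
  then show ?thesis
    using vs assms(2) by (auto simp: construction_order_def pins_first_def)
qed

lemma pins_first_earlier:
  assumes "pins_first P vs = ws @ v # ws'" and "v \<notin> P"
  obtains vs1 vs2 where "vs = vs1 @ v # vs2" and "set ws \<subseteq> set vs1 \<union> P"
proof -
  let ?A = "filter (\<lambda>x. x \<in> P) vs"
  obtain B1 where ws: "ws = ?A @ B1" and B: "filter (\<lambda>x. x \<notin> P) vs = B1 @ v # ws'"
  proof -
    from assms(1) consider us where "?A = ws @ us" "us @ filter (\<lambda>x. x \<notin> P) vs = v # ws'"
      | us where "?A @ us = ws" "filter (\<lambda>x. x \<notin> P) vs = us @ v # ws'"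
      unfolding pins_first_def append_eq_append_conv2 by blast
    then show ?thesis
    proof cases
      case (1 us)
      have "v \<notin> set ?A"
        using assms(2) by simp
      with 1 have "us = []"
        by (cases us) auto
      with 1 show ?thesis
        using that[of "[]"] by simp
    next
      case (2 us)
      then show ?thesis
        using that[of us] by simp
    qed
  qed
  from filter_eq_append_ConsD[OF B] obtain vs1 vs2
    where "vs = vs1 @ v # vs2" and "filter (\<lambda>x. x \<notin> P) vs1 = B1"
    by blast
  moreover from this have "set ws \<subseteq> set vs1 \<union> P"
    using ws by auto
  ultimately show ?thesis
    using that by blast
qed

lemma back_degree_pins_first_le:
  assumes vs: "construction_order V P' vs" and "P' \<subseteq> P" and "P \<subseteq> V" and "finite P"
    and i: "card P \<le> i" "i < length (pins_first P vs)"
  obtains j where "card P' \<le> j" and "j < length vs"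
    and "back_degree E (pins_first P vs) i \<le> back_degree E vs j + card (P - P')"
proof -
  let ?ws = "pins_first P vs"
  have ws: "construction_order V P ?ws"
    by (rule construction_order_pins_first[OF vs assms(3)])
  define v where "v = ?ws ! i"
  obtain ws1 ws2 where ws_split: "?ws = ws1 @ v # ws2" and "length ws1 = i"
    using id_take_nth_drop[OF i(2)] i(2) by (simp add: v_def)
  have "v \<notin> P"
    using construction_order_nth_notin[OF ws i] by (simp add: v_def)
  with ws_split obtain vs1 vs2 where vs_split: "vs = vs1 @ v # vs2"
    and earlier: "set ws1 \<subseteq> set vs1 \<union> P"
    by (rule pins_first_earlier)
  have "v \<notin> P'"
    using \<open>v \<notin> P\<close> assms(2) by blast
  note pinned = construction_order_pinned_before[OF vs[unfolded vs_split] this]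
  have "back_degree E (ws1 @ v # ws2) (length ws1)
      \<le> back_degree E (vs1 @ v # vs2) (length vs1) + card (P - P')"
  proof (rule back_degree_le_if_earlier_subset)
    show "distinct (vs1 @ v # vs2)" and "distinct (ws1 @ v # ws2)"
      using vs ws vs_split ws_split by (simp_all add: construction_order_def)
    show "set ws1 \<subseteq> set vs1 \<union> (P - P')"
      using earlier pinned(2) by blast
  qed (use \<open>finite P\<close> in simp)
  then show ?thesis
    using that[of "length vs1"] pinned(1) vs_split ws_split \<open>length ws1 = i\<close> by simp
qed

theorem proposition4p5:
  fixes V :: "'a set" and E :: "'a \<Rightarrow> 'a \<Rightarrow> bool" and P P' :: "'a set" and k m0 m :: nat
  assumes "simple_graph V E"
    and "P' \<subseteq> P" and "P \<subseteq> V"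
    and "\<forall>u\<in>P. \<forall>v\<in>P. \<not> E u v"
    and "card P' = m0" and "card P = m0 + m"
    and "admissible k V E P'"
  shows "admissible (k + m) V E P"
proof -
  have "finite P"
    using assms(1,3) finite_subset by (auto simp: simple_graph_def)
  then have card_diff: "card (P - P') = m"
    using assms(2,5,6) by (simp add: card_Diff_subset finite_subset)
  obtain vs where vs: "construction_order V P' vs"
    and bd: "\<And>j. card P' \<le> j \<Longrightarrow> j < length vs \<Longrightarrow> back_degree E vs j \<le> k"
    using assms(7) unfolding admissible_def by blast
  have "construction_order V P (pins_first P vs)"
    by (rule construction_order_pins_first[OF vs assms(3)])
  moreover have "back_degree E (pins_first P vs) i \<le> k + m"
    if i: "card P \<le> i" "i < length (pins_first P vs)" for i
  proof -
    obtain j where "card P' \<le> j" "j < length vs"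
      and "back_degree E (pins_first P vs) i \<le> back_degree E vs j + card (P - P')"
      using back_degree_pins_first_le[OF vs assms(2,3) \<open>finite P\<close> i] by blast
    then show ?thesis
      using bd card_diff by fastforce
  qed
  ultimately show ?thesis
    unfolding admissible_def by blast
qed

end
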